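(* Fix $k\in\mathbb N$ and $a_1,\dots,a_k<0$, let $A_N=\operatorname{diag}(a_1,\dots,a_k,0,\dots,0)\in\mathbb R^{N\times N}$, let $\mathbf y_1,\dots,\mathbf y_N$ be i.i.d. $\mathcal N(0,\mathrm{Id}_N)$ vectors, and let $\gamma_k=\frac12\big(\frac{2}{k\Gamma(k/2)}\big)^{2/k}$. Then $$\frac{\gamma_kN^{2/k}}{\big(\prod_{j=1}^k|a_j|\big)^{1/k}}\max_{i=1}^N\langle\mathbf y_i,A_N\mathbf y_i\rangle\to\Psi_{k/2}\quad\text{in distribution as }N\to\infty,$$ where $\Psi_{k/2}$ has distribution function $\min(\exp(-(-x)^{k/2}),1)$. *)

theory Defs
  imports "HOL-Probability.Probability"
begin

text \<open>The N x N matrix A_N = diag(a_1,...,a_k,0,...,0), indices 0-based (entries i,j < N).\<close>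
definition diagA :: "nat \<Rightarrow> (nat \<Rightarrow> real) \<Rightarrow> nat \<Rightarrow> nat \<Rightarrow> real" where
  "diagA k a i j = (if i = j \<and> i < k then a i else 0)"

definition quadform :: "nat \<Rightarrow> (nat \<Rightarrow> nat \<Rightarrow> real) \<Rightarrow> (nat \<Rightarrow> real) \<Rightarrow> real" where
  "quadform N A y = (\<Sum>i<N. y i * (\<Sum>j<N. A i j * y j))"

definition gamma_k :: "nat \<Rightarrow> real" where
  "gamma_k k = 1/2 * (2 / (real k * Gamma (real k / 2))) powr (2 / real k)"

definition Psi_cdf :: "real \<Rightarrow> real \<Rightarrow> real" where
  "Psi_cdf \<alpha> x = (if x < 0 then exp (- ((- x) powr \<alpha>)) else 1)"

end

theory Submission
  imports Defs
begin

(*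
  Since a_1, ..., a_k < 0, the quadratic form of row i is -S_i, where
  S_i = sum_{j<k} |a_j| y_ij^2 is the squared norm of a centred Gaussian vector
  of R^k with covariance diag |a_j|. The rows are independent, so with c_N the
  normalising factor and t_N = -x / c_N,

    P(c_N max_i <y_i, A_N y_i> <= x) = prod_{i<N} (1 - P(S_i < t_N)).

  For x >= 0 every factor is 1. For x < 0 we have t_N -> 0, and P(S_i < t) lies
  between vol(B_k) t^(k/2) times the Gaussian density on the sphere of radius
  sqrt t and vol(B_k) t^(k/2) times its value (2 pi)^(-k/2) (prod_j |a_j|)^(-1/2)
  at the origin. Because gamma_k^(k/2) = vol(B_k) / (2 pi)^(k/2), this gives
  N P(S_i < t_N) -> (-x)^(k/2), and (1 - q_N)^N -> exp(-lim N q_N).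
*)

lemma sqrt_power_eq_powr: "0 < x \<Longrightarrow> sqrt x ^ n = x powr (real n / 2)"
  by (simp add: powr_half_sqrt[symmetric] powr_realpow[symmetric] powr_powr)

lemma normal_density_zero_mean_antimono:
  assumes "\<bar>z\<bar> \<le> \<bar>w\<bar>"
  shows "normal_density 0 \<sigma> w \<le> normal_density 0 \<sigma> z"
proof -
  have "- w\<^sup>2 / (2 * \<sigma>\<^sup>2) \<le> - z\<^sup>2 / (2 * \<sigma>\<^sup>2)"
    using assms by (intro divide_right_mono) (auto simp: abs_le_square_iff)
  then show ?thesis
    unfolding normal_density_def by (intro mult_left_mono) auto
qed

lemma prod_normal_density_zero:
  "(\<Prod>j\<in>J. normal_density 0 (\<sigma> j) 0) = 1 / (sqrt (2 * pi) ^ card J * (\<Prod>j\<in>J. \<bar>\<sigma> j\<bar>))"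
proof -
  have "normal_density 0 (\<sigma> j) 0 = 1 / (sqrt (2 * pi) * \<bar>\<sigma> j\<bar>)" for j
    by (simp add: normal_density_def real_sqrt_mult)
  then show ?thesis
    by (cases "finite J") (simp_all add: prod_dividef prod.distrib)
qed

lemma prod_normal_density_ball_bounds:
  assumes J: "finite J" and x: "(\<Sum>j\<in>J. (x j)\<^sup>2) \<le> r\<^sup>2" and r: "0 \<le> r"
  shows "(\<Prod>j\<in>J. normal_density 0 (\<sigma> j) r) \<le> (\<Prod>j\<in>J. normal_density 0 (\<sigma> j) (x j))"
    and "(\<Prod>j\<in>J. normal_density 0 (\<sigma> j) (x j)) \<le> (\<Prod>j\<in>J. normal_density 0 (\<sigma> j) 0)"
proof -
  have "\<bar>x j\<bar> \<le> \<bar>r\<bar>" if "j \<in> J" for j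
  proof -
    have "(x j)\<^sup>2 \<le> (\<Sum>j\<in>J. (x j)\<^sup>2)"
      using J that by (intro member_le_sum) auto
    with x show ?thesis
      by (simp add: abs_le_square_iff)
  qed
  then show "(\<Prod>j\<in>J. normal_density 0 (\<sigma> j) r) \<le> (\<Prod>j\<in>J. normal_density 0 (\<sigma> j) (x j))"
    and "(\<Prod>j\<in>J. normal_density 0 (\<sigma> j) (x j)) \<le> (\<Prod>j\<in>J. normal_density 0 (\<sigma> j) 0)"
    by (auto intro!: prod_mono normal_density_zero_mean_antimono)
qed

lemma PiM_density_lborel:
  fixes \<phi> :: "'j \<Rightarrow> real \<Rightarrow> real"
  assumes J: "finite J"
    and sf: "\<And>j. sigma_finite_measure (density lborel (\<lambda>x. ennreal (\<phi> j x)))"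
    and meas[measurable]: "\<And>j. \<phi> j \<in> borel_measurable borel"
  shows "PiM J (\<lambda>j. density lborel (\<lambda>x. ennreal (\<phi> j x))) =
         density (PiM J (\<lambda>_. lborel)) (\<lambda>x. \<Prod>j\<in>J. ennreal (\<phi> j (x j)))"
proof -
  interpret P: product_sigma_finite "\<lambda>j. density lborel (\<lambda>x. ennreal (\<phi> j x))"
    unfolding product_sigma_finite_def using sf by auto
  interpret L: product_sigma_finite "\<lambda>_. lborel"
    by (simp add: product_sigma_finite_def lborel.sigma_finite_measure_axioms)
  show ?thesis
  proof (rule P.PiM_eqI[symmetric, OF J])
    show "sets (density (PiM J (\<lambda>_. lborel)) (\<lambda>x. \<Prod>j\<in>J. ennreal (\<phi> j (x j)))) =
        sets (PiM J (\<lambda>j. density lborel (\<lambda>x. ennreal (\<phi> j x))))"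
      unfolding sets_density by (rule sets_PiM_cong) auto
  next
    fix A assume A: "\<And>j. j \<in> J \<Longrightarrow> A j \<in> sets (density lborel (\<lambda>x. ennreal (\<phi> j x)))"
    then have "Pi\<^sub>E J A \<in> sets (PiM J (\<lambda>_. lborel))"
      by (auto intro!: sets_PiM_I_finite J)
    then have "emeasure (density (PiM J (\<lambda>_. lborel)) (\<lambda>x. \<Prod>j\<in>J. ennreal (\<phi> j (x j)))) (Pi\<^sub>E J A)
       = (\<integral>\<^sup>+ x. (\<Prod>j\<in>J. ennreal (\<phi> j (x j))) * indicator (Pi\<^sub>E J A) x \<partial>PiM J (\<lambda>_. lborel))"
      by (subst emeasure_density) (auto simp: mult.commute)
    also have "\<dots> = (\<integral>\<^sup>+ x. (\<Prod>j\<in>J. ennreal (\<phi> j (x j)) * indicator (A j) (x j)) \<partial>PiM J (\<lambda>_. lborel))"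
      using J by (intro nn_integral_cong)
        (auto simp: space_PiM PiE_def Pi_def indicator_def prod_zero_iff extensional_def)
    also have "\<dots> = (\<Prod>j\<in>J. \<integral>\<^sup>+ y. ennreal (\<phi> j y) * indicator (A j) y \<partial>lborel)"
      using A by (intro L.product_nn_integral_prod J) auto
    also have "\<dots> = (\<Prod>j\<in>J. emeasure (density lborel (\<lambda>x. ennreal (\<phi> j x))) (A j))"
      using A by (intro prod.cong refl, subst emeasure_density) auto
    finally show "emeasure (density (PiM J (\<lambda>_. lborel)) (\<lambda>x. \<Prod>j\<in>J. ennreal (\<phi> j (x j)))) (Pi\<^sub>E J A)
       = (\<Prod>j\<in>J. emeasure (density lborel (\<lambda>x. ennreal (\<phi> j x))) (A j))" .
  qed
qed

lemma emeasure_density_bounds: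
  assumes f[measurable]: "f \<in> borel_measurable N" and B: "B \<in> sets N"
    and bounds: "\<And>x. x \<in> B \<Longrightarrow> lo \<le> f x \<and> f x \<le> hi"
  shows "lo * emeasure N B \<le> emeasure (density N f) B"
    and "emeasure (density N f) B \<le> hi * emeasure N B"
proof -
  have density: "emeasure (density N f) B = (\<integral>\<^sup>+x. f x * indicator B x \<partial>N)"
    using B by (rule emeasure_density[OF f])
  have "lo * emeasure N B = (\<integral>\<^sup>+x. lo * indicator B x \<partial>N)"
    using nn_integral_cmult_indicator[OF B] by simp
  also have "\<dots> \<le> (\<integral>\<^sup>+x. f x * indicator B x \<partial>N)"
    using bounds by (intro nn_integral_mono) (simp split: split_indicator)
  finally show "lo * emeasure N B \<le> emeasure (density N f) B"
    unfolding density .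
  have "(\<integral>\<^sup>+x. f x * indicator B x \<partial>N) \<le> (\<integral>\<^sup>+x. hi * indicator B x \<partial>N)"
    using bounds by (intro nn_integral_mono) (simp split: split_indicator)
  also have "\<dots> = hi * emeasure N B"
    using nn_integral_cmult_indicator[OF B] by simp
  finally show "emeasure (density N f) B \<le> hi * emeasure N B"
    unfolding density .
qed

lemma (in prob_space) indep_vars_block_functions:
  assumes "indep_vars M' X I" "\<And>l. l \<in> L \<Longrightarrow> K l \<subseteq> I" "disjoint_family_on K L"
    and "\<And>l. l \<in> L \<Longrightarrow> f l \<in> measurable (PiM (K l) M') (N l)"
  shows "indep_vars N (\<lambda>l \<omega>. f l (restrict (\<lambda>i. X i \<omega>) (K l))) L"
  using indep_vars_compose2[OF indep_vars_restrict[OF assms(1-3)] assms(4)] .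

lemma (in prob_space) indep_normal_distr_PiM:
  fixes Z :: "'j \<Rightarrow> 'a \<Rightarrow> real"
  assumes J: "finite J" "J \<noteq> {}" and indep: "indep_vars (\<lambda>_. borel) Z J"
    and normal: "\<And>j. j \<in> J \<Longrightarrow> distributed M lborel (Z j) (normal_density 0 (\<sigma> j))"
    and pos: "\<And>j. j \<in> J \<Longrightarrow> \<sigma> j > 0"
  shows "distr M (PiM J (\<lambda>_. borel)) (\<lambda>\<omega>. \<lambda>j\<in>J. Z j \<omega>) =
         density (PiM J (\<lambda>_. lborel)) (\<lambda>x. \<Prod>j\<in>J. ennreal (normal_density 0 (\<sigma> j) (x j)))"
proof -
  define \<sigma>' where "\<sigma>' j = (if j \<in> J then \<sigma> j else 1)" for j
  have "distr M (PiM J (\<lambda>_. borel)) (\<lambda>\<omega>. \<lambda>j\<in>J. Z j \<omega>) = PiM J (\<lambda>j. distr M borel (Z j))"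
    using indep indep_vars_iff_distr_eq_PiM'[OF J(2), where M'="\<lambda>_. borel" and X=Z]
    by (simp add: indep_vars_def)
  also have "\<dots> = PiM J (\<lambda>j. density lborel (\<lambda>x. ennreal (normal_density 0 (\<sigma>' j) x)))"
  proof (rule PiM_cong)
    fix j assume "j \<in> J"
    have "distr M borel (Z j) = distr M lborel (Z j)"
      by (rule distr_cong) auto
    with normal[OF \<open>j \<in> J\<close>] \<open>j \<in> J\<close>
    show "distr M borel (Z j) = density lborel (\<lambda>x. ennreal (normal_density 0 (\<sigma>' j) x))"
      by (simp add: distributed_def \<sigma>'_def)
  qed simp
  also have "\<dots> = density (PiM J (\<lambda>_. lborel)) (\<lambda>x. \<Prod>j\<in>J. ennreal (normal_density 0 (\<sigma>' j) (x j)))"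
    using pos by (intro PiM_density_lborel J prob_space_imp_sigma_finite prob_space_normal_density)
      (auto simp: \<sigma>'_def)
  also have "\<dots> = density (PiM J (\<lambda>_. lborel)) (\<lambda>x. \<Prod>j\<in>J. ennreal (normal_density 0 (\<sigma> j) (x j)))"
    by (simp add: \<sigma>'_def)
  finally show ?thesis .
qed

lemma (in prob_space) indep_normal_prob_sum_sq_le_eq_density:
  fixes Z :: "'j \<Rightarrow> 'a \<Rightarrow> real"
  assumes J: "finite J" "J \<noteq> {}" and indep: "indep_vars (\<lambda>_. borel) Z J"
    and normal: "\<And>j. j \<in> J \<Longrightarrow> distributed M lborel (Z j) (normal_density 0 (\<sigma> j))"
    and pos: "\<And>j. j \<in> J \<Longrightarrow> \<sigma> j > 0" and r: "r \<ge> 0"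
  shows "ennreal (prob {\<omega>\<in>space M. (\<Sum>j\<in>J. (Z j \<omega>)\<^sup>2) \<le> r\<^sup>2}) =
    emeasure (density (PiM J (\<lambda>_. lborel)) (\<lambda>x. \<Prod>j\<in>J. ennreal (normal_density 0 (\<sigma> j) (x j))))
      ({x. sqrt (\<Sum>j\<in>J. (x j)\<^sup>2) \<le> r} \<inter> space (PiM J (\<lambda>_. lborel)))"
proof -
  define B where "B = {x. sqrt (\<Sum>j\<in>J. (x j)\<^sup>2) \<le> r} \<inter> space (PiM J (\<lambda>_. lborel :: real measure))"
  have "sets (PiM J (\<lambda>_. lborel)) = sets (PiM J (\<lambda>_. borel :: real measure))"
    by (rule sets_PiM_cong) auto
  moreover have "B \<in> sets (PiM J (\<lambda>_. lborel))"
    unfolding B_def by measurable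
  ultimately have B: "B \<in> sets (PiM J (\<lambda>_. borel))"
    by simp
  have X: "(\<lambda>\<omega>. \<lambda>j\<in>J. Z j \<omega>) \<in> measurable M (PiM J (\<lambda>_. borel))"
    using indep unfolding indep_vars_def by (auto intro!: measurable_restrict)
  have "(\<lambda>\<omega>. \<lambda>j\<in>J. Z j \<omega>) -` B \<inter> space M
      = {\<omega>\<in>space M. (\<Sum>j\<in>J. (Z j \<omega>)\<^sup>2) \<le> r\<^sup>2}"
    using r by (auto simp: B_def space_PiM real_sqrt_le_iff' sum_nonneg)
  then have "ennreal (prob {\<omega>\<in>space M. (\<Sum>j\<in>J. (Z j \<omega>)\<^sup>2) \<le> r\<^sup>2})
      = emeasure (distr M (PiM J (\<lambda>_. borel)) (\<lambda>\<omega>. \<lambda>j\<in>J. Z j \<omega>)) B"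
    using X B by (simp add: emeasure_distr emeasure_eq_measure)
  then show ?thesis
    unfolding B_def by (simp add: indep_normal_distr_PiM[OF J indep normal pos])
qed

lemma (in prob_space) indep_normal_prob_sum_sq_le_bounds:
  fixes Z :: "'j \<Rightarrow> 'a \<Rightarrow> real"
  assumes J: "finite J" "J \<noteq> {}" and indep: "indep_vars (\<lambda>_. borel) Z J"
    and normal: "\<And>j. j \<in> J \<Longrightarrow> distributed M lborel (Z j) (normal_density 0 (\<sigma> j))"
    and pos: "\<And>j. j \<in> J \<Longrightarrow> \<sigma> j > 0" and r: "r > 0"
  shows "(\<Prod>j\<in>J. normal_density 0 (\<sigma> j) r) * (unit_ball_vol (card J) * r ^ card J)
           \<le> prob {\<omega>\<in>space M. (\<Sum>j\<in>J. (Z j \<omega>)\<^sup>2) \<le> r\<^sup>2}"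
    and "prob {\<omega>\<in>space M. (\<Sum>j\<in>J. (Z j \<omega>)\<^sup>2) \<le> r\<^sup>2}
           \<le> (\<Prod>j\<in>J. normal_density 0 (\<sigma> j) 0) * (unit_ball_vol (card J) * r ^ card J)"
proof -
  define B where "B = {x. sqrt (\<Sum>j\<in>J. (x j)\<^sup>2) \<le> r} \<inter> space (PiM J (\<lambda>_. lborel :: real measure))"
  define E where "E = {\<omega>\<in>space M. (\<Sum>j\<in>J. (Z j \<omega>)\<^sup>2) \<le> r\<^sup>2}"
  define lo where "lo = (\<Prod>j\<in>J. normal_density 0 (\<sigma> j) r)"
  define hi where "hi = (\<Prod>j\<in>J. normal_density 0 (\<sigma> j) 0)"
  define V where "V = unit_ball_vol (card J) * r ^ card J"
  have B: "B \<in> sets (PiM J (\<lambda>_. lborel))"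
    unfolding B_def by measurable
  have vol: "emeasure (PiM J (\<lambda>_. lborel)) B = ennreal V"
    unfolding B_def V_def using emeasure_cball_aux[OF J(1) r] by simp
  have bounds: "ennreal lo \<le> (\<Prod>j\<in>J. ennreal (normal_density 0 (\<sigma> j) (x j)))
      \<and> (\<Prod>j\<in>J. ennreal (normal_density 0 (\<sigma> j) (x j))) \<le> ennreal hi" if "x \<in> B" for x
  proof -
    have "(\<Sum>j\<in>J. (x j)\<^sup>2) \<le> r\<^sup>2"
      using that r by (simp add: B_def real_sqrt_le_iff' sum_nonneg)
    from prod_normal_density_ball_bounds[OF J(1) this, of \<sigma>] r show ?thesis
      unfolding lo_def hi_def by (simp add: prod_ennreal ennreal_leI)
  qed
  have "(\<lambda>x. \<Prod>j\<in>J. ennreal (normal_density 0 (\<sigma> j) (x j))) \<in> borel_measurable (PiM J (\<lambda>_. lborel))"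
    unfolding normal_density_def by measurable
  note density_bounds = emeasure_density_bounds[OF this B bounds]
  have "ennreal (prob E) = emeasure (density (PiM J (\<lambda>_. lborel))
      (\<lambda>x. \<Prod>j\<in>J. ennreal (normal_density 0 (\<sigma> j) (x j)))) B"
    unfolding E_def B_def using r by (intro indep_normal_prob_sum_sq_le_eq_density J indep normal pos) simp_all
  with density_bounds
  have "ennreal lo * ennreal V \<le> ennreal (prob E)" "ennreal (prob E) \<le> ennreal hi * ennreal V"
    unfolding vol by simp_all
  moreover have "lo \<ge> 0" "hi \<ge> 0" "V \<ge> 0"
    unfolding lo_def hi_def V_def using r by (auto intro: prod_nonneg)
  ultimately show "lo * V \<le> prob E" "prob E \<le> hi * V"
    by (simp_all add: ennreal_mult[symmetric])
qed

lemma mult_power_le_if_le_below: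
  fixes c p r :: real
  assumes r: "r > 0" and below: "\<And>s. 0 < s \<Longrightarrow> s < r \<Longrightarrow> c * s ^ n \<le> p"
  shows "c * r ^ n \<le> p"
proof (rule tendsto_le[OF trivial_limit_at_left_real tendsto_const])
  show "((\<lambda>s. c * s ^ n) \<longlongrightarrow> c * r ^ n) (at_left r)"
    by (intro tendsto_intros)
  show "eventually (\<lambda>s. c * s ^ n \<le> p) (at_left r)"
    using eventually_at_left_real[OF r] by (auto elim: eventually_mono intro: below)
qed

lemma (in prob_space) indep_normal_prob_sum_sq_less_bounds:
  fixes Z :: "'j \<Rightarrow> 'a \<Rightarrow> real"
  assumes J: "finite J" "J \<noteq> {}" and indep: "indep_vars (\<lambda>_. borel) Z J"
    and normal: "\<And>j. j \<in> J \<Longrightarrow> distributed M lborel (Z j) (normal_density 0 (\<sigma> j))"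
    and pos: "\<And>j. j \<in> J \<Longrightarrow> \<sigma> j > 0" and r: "r > 0"
  shows "(\<Prod>j\<in>J. normal_density 0 (\<sigma> j) r) * (unit_ball_vol (card J) * r ^ card J)
           \<le> prob {\<omega>\<in>space M. (\<Sum>j\<in>J. (Z j \<omega>)\<^sup>2) < r\<^sup>2}"
    and "prob {\<omega>\<in>space M. (\<Sum>j\<in>J. (Z j \<omega>)\<^sup>2) < r\<^sup>2}
           \<le> (\<Prod>j\<in>J. normal_density 0 (\<sigma> j) 0) * (unit_ball_vol (card J) * r ^ card J)"
proof -
  have bound_le: "(\<Prod>j\<in>J. normal_density 0 (\<sigma> j) s) * (unit_ball_vol (card J) * s ^ card J)
      \<le> prob {\<omega>\<in>space M. (\<Sum>j\<in>J. (Z j \<omega>)\<^sup>2) \<le> s\<^sup>2}" if "s > 0" for s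
    using indep_normal_prob_sum_sq_le_bounds(1)[OF J indep normal pos that] by simp
  have bound_ge: "prob {\<omega>\<in>space M. (\<Sum>j\<in>J. (Z j \<omega>)\<^sup>2) \<le> r\<^sup>2}
      \<le> (\<Prod>j\<in>J. normal_density 0 (\<sigma> j) 0) * (unit_ball_vol (card J) * r ^ card J)"
    using indep_normal_prob_sum_sq_le_bounds(2)[OF J indep normal pos r] by simp
  have [measurable]: "Z j \<in> borel_measurable M" if "j \<in> J" for j
    using indep that by (simp add: indep_vars_def)
  define p where "p = prob {\<omega>\<in>space M. (\<Sum>j\<in>J. (Z j \<omega>)\<^sup>2) < r\<^sup>2}"
  \<comment> \<open>Exhaust the open ball by the closed balls of radius \<open>s < r\<close>.\<close>
  have "(\<Prod>j\<in>J. normal_density 0 (\<sigma> j) r) * unit_ball_vol (card J) * s ^ card J \<le> p"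
    if s: "0 < s" "s < r" for s
  proof -
    have "(\<Prod>j\<in>J. normal_density 0 (\<sigma> j) r) * unit_ball_vol (card J) * s ^ card J
        \<le> (\<Prod>j\<in>J. normal_density 0 (\<sigma> j) s) * (unit_ball_vol (card J) * s ^ card J)"
      using s by (auto simp: mult.assoc intro!: mult_right_mono prod_mono normal_density_zero_mean_antimono)
    also have "\<dots> \<le> prob {\<omega>\<in>space M. (\<Sum>j\<in>J. (Z j \<omega>)\<^sup>2) \<le> s\<^sup>2}"
      using bound_le s(1) .
    also have "\<dots> \<le> p"
      unfolding p_def using s power_strict_mono[of s r 2]
      by (intro finite_measure_mono) (auto intro!: sets.sets_Collect_conj)
    finally show ?thesis .
  qed
  then have "(\<Prod>j\<in>J. normal_density 0 (\<sigma> j) r) * unit_ball_vol (card J) * r ^ card J \<le> p"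
    by (rule mult_power_le_if_le_below[OF r])
  then show "(\<Prod>j\<in>J. normal_density 0 (\<sigma> j) r) * (unit_ball_vol (card J) * r ^ card J) \<le> p"
    by (simp add: mult.assoc)
  have "p \<le> prob {\<omega>\<in>space M. (\<Sum>j\<in>J. (Z j \<omega>)\<^sup>2) \<le> r\<^sup>2}"
    unfolding p_def by (intro finite_measure_mono) auto
  with bound_ge
  show "p \<le> (\<Prod>j\<in>J. normal_density 0 (\<sigma> j) 0) * (unit_ball_vol (card J) * r ^ card J)"
    by linarith
qed

lemma tendsto_zero_if_real_mult_tendsto:
  fixes q :: "nat \<Rightarrow> real"
  assumes "(\<lambda>n. real n * q n) \<longlonglongrightarrow> L"
  shows "q \<longlonglongrightarrow> 0"
proof -
  have "(\<lambda>n. real n * q n * (1 / real n)) \<longlonglongrightarrow> L * 0"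
    by (intro tendsto_mult assms lim_inverse_n')
  moreover have "eventually (\<lambda>n. real n * q n * (1 / real n) = q n) sequentially"
    using eventually_gt_at_top[of 0] by eventually_elim auto
  ultimately show ?thesis
    by (auto dest: Lim_transform_eventually)
qed

lemma tendsto_real_mult_ln_one_minus:
  fixes q :: "nat \<Rightarrow> real"
  assumes nonneg: "eventually (\<lambda>n. 0 \<le> q n) sequentially"
    and lim: "(\<lambda>n. real n * q n) \<longlonglongrightarrow> L"
  shows "(\<lambda>n. real n * ln (1 - q n)) \<longlonglongrightarrow> - L"
proof (rule tendsto_sandwich)
  have q: "q \<longlonglongrightarrow> 0"
    using lim by (rule tendsto_zero_if_real_mult_tendsto)
  then have small: "eventually (\<lambda>n. q n < 1/2) sequentially"
    by (rule order_tendstoD) simp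
  show "eventually (\<lambda>n. - (real n * q n) - 2 * (real n * q n) * q n \<le> real n * ln (1 - q n)) sequentially"
    using nonneg small
  proof eventually_elim
    case (elim n)
    have "- q n - 2 * (q n)\<^sup>2 \<le> ln (1 - q n)"
      using elim by (intro ln_one_minus_pos_lower_bound) auto
    then have "real n * (- q n - 2 * (q n)\<^sup>2) \<le> real n * ln (1 - q n)"
      by (intro mult_left_mono) auto
    then show ?case
      by (simp add: algebra_simps power2_eq_square)
  qed
  show "eventually (\<lambda>n. real n * ln (1 - q n) \<le> - (real n * q n)) sequentially"
    using nonneg small
  proof eventually_elim
    case (elim n)
    have "ln (1 - q n) \<le> - q n"
      using elim ln_le_minus_one[of "1 - q n"] by auto
    then show ?case
      by (metis mult_left_mono mult_minus_right of_nat_0_le_iff)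
  qed
  show "(\<lambda>n. - (real n * q n) - 2 * (real n * q n) * q n) \<longlonglongrightarrow> - L"
    using tendsto_diff[OF tendsto_minus[OF lim] tendsto_mult[OF tendsto_mult[OF tendsto_const lim] q]]
    by simp
  show "(\<lambda>n. - (real n * q n)) \<longlonglongrightarrow> - L"
    by (intro tendsto_intros lim)
qed

lemma tendsto_one_minus_power_exp:
  fixes q :: "nat \<Rightarrow> real"
  assumes nonneg: "eventually (\<lambda>n. 0 \<le> q n) sequentially"
    and lim: "(\<lambda>n. real n * q n) \<longlonglongrightarrow> L"
  shows "(\<lambda>n. (1 - q n) ^ n) \<longlonglongrightarrow> exp (- L)"
proof -
  have "(\<lambda>n. exp (real n * ln (1 - q n))) \<longlonglongrightarrow> exp (- L)"
    by (intro tendsto_exp tendsto_real_mult_ln_one_minus nonneg lim)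
  moreover have "q \<longlonglongrightarrow> 0"
    using lim by (rule tendsto_zero_if_real_mult_tendsto)
  then have "eventually (\<lambda>n. q n < 1) sequentially"
    by (rule order_tendstoD) simp
  then have "eventually (\<lambda>n. exp (real n * ln (1 - q n)) = (1 - q n) ^ n) sequentially"
    by eventually_elim (simp add: exp_of_nat_mult)
  ultimately show ?thesis
    by (rule Lim_transform_eventually)
qed

lemma tendsto_prod_one_minus_exp:
  fixes p :: "nat \<Rightarrow> nat \<Rightarrow> real"
  assumes bounds: "eventually (\<lambda>n. 0 \<le> lo n \<and> (\<forall>i<n. lo n \<le> p n i \<and> p n i \<le> hi n)) sequentially"
    and lo: "(\<lambda>n. real n * lo n) \<longlonglongrightarrow> L" and hi: "(\<lambda>n. real n * hi n) \<longlonglongrightarrow> L"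
  shows "(\<lambda>n. \<Prod>i<n. 1 - p n i) \<longlonglongrightarrow> exp (- L)"
proof (rule tendsto_sandwich)
  have "hi \<longlonglongrightarrow> 0"
    using hi by (rule tendsto_zero_if_real_mult_tendsto)
  then have "eventually (\<lambda>n. hi n \<le> 1) sequentially"
    by (rule eventually_mono[OF order_tendstoD(2), of _ _ _ 1]) auto
  with bounds eventually_gt_at_top[of 0]
  have ev: "eventually (\<lambda>n. 0 \<le> lo n \<and> lo n \<le> hi n \<and> hi n \<le> 1 \<and>
      (\<forall>i<n. lo n \<le> p n i \<and> p n i \<le> hi n)) sequentially"
    by eventually_elim auto
  show "eventually (\<lambda>n. (1 - hi n) ^ n \<le> (\<Prod>i<n. 1 - p n i)) sequentially"
    using ev
  proof eventually_elim
    case (elim n)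
    then have "(\<Prod>i<n. 1 - hi n) \<le> (\<Prod>i<n. 1 - p n i)"
      by (intro prod_mono) auto
    then show ?case
      by simp
  qed
  show "eventually (\<lambda>n. (\<Prod>i<n. 1 - p n i) \<le> (1 - lo n) ^ n) sequentially"
    using ev
  proof eventually_elim
    case (elim n)
    then have "(\<Prod>i<n. 1 - p n i) \<le> (\<Prod>i<n. 1 - lo n)"
      by (intro prod_mono) auto
    then show ?case
      by simp
  qed
  show "(\<lambda>n. (1 - hi n) ^ n) \<longlonglongrightarrow> exp (- L)"
    using ev by (intro tendsto_one_minus_power_exp hi) (auto elim: eventually_mono)
  show "(\<lambda>n. (1 - lo n) ^ n) \<longlonglongrightarrow> exp (- L)"
    using ev by (intro tendsto_one_minus_power_exp lo) (auto elim: eventually_mono)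
qed

lemma gamma_k_pos:
  assumes "0 < k"
  shows "gamma_k k > 0"
proof -
  have "Gamma (real k / 2) \<noteq> 0"
    using Gamma_real_pos[of "real k / 2"] assms by force
  then show ?thesis
    using assms by (simp add: gamma_k_def)
qed

lemma gamma_k_powr:
  assumes "0 < k"
  shows "gamma_k k powr (real k / 2) = unit_ball_vol (real k) / (2 * pi) powr (real k / 2)"
proof -
  define G where "G = Gamma (real k / 2)"
  have G: "G > 0"
    unfolding G_def using assms by (simp add: Gamma_real_pos)
  have Gamma_succ: "Gamma (real k / 2 + 1) = real k / 2 * G"
    unfolding G_def using assms by (subst Gamma_plus1) (auto simp: nonpos_Ints_def)
  have "unit_ball_vol (real k) / (2 * pi) powr (real k / 2) = 2 / (real k * G) / 2 powr (real k / 2)"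
    unfolding unit_ball_vol_def Gamma_succ using G by (simp add: powr_mult field_simps)
  also have "\<dots> = (1/2) powr (real k / 2) * ((2 / (real k * G)) powr (2 / real k)) powr (real k / 2)"
    using assms G by (simp add: powr_powr powr_divide)
  also have "\<dots> = (1/2 * (2 / (real k * G)) powr (2 / real k)) powr (real k / 2)"
    using G assms by (subst powr_mult) auto
  also have "\<dots> = gamma_k k powr (real k / 2)"
    unfolding gamma_k_def G_def ..
  finally show ?thesis ..
qed

lemma scaled_threshold_constant:
  assumes k: "0 < k" and y: "y > 0" and P: "P > 0"
  shows "1 / (sqrt (2 * pi) ^ k * sqrt P) * unit_ball_vol k * (y * P powr (1 / real k) / gamma_k k) powr (real k / 2)
           = y powr (real k / 2)"
proof -
  have "(y * P powr (1 / real k) / gamma_k k) powr (real k / 2)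
      = y powr (real k / 2) * sqrt P / gamma_k k powr (real k / 2)"
    using y P k gamma_k_pos[OF k]
    by (simp add: powr_mult powr_divide powr_powr powr_half_sqrt)
  moreover have "sqrt (2 * pi) ^ k = (2 * pi) powr (real k / 2)"
    by (simp add: sqrt_power_eq_powr)
  moreover have "unit_ball_vol k \<noteq> 0"
    using unit_ball_vol_pos[of k] by linarith
  ultimately show ?thesis
    using P k by (simp add: gamma_k_powr)
qed

definition max_quadform_scale :: "nat \<Rightarrow> (nat \<Rightarrow> real) \<Rightarrow> nat \<Rightarrow> real" where
  "max_quadform_scale k a N = gamma_k k * real N powr (2 / real k) / (\<Prod>j<k. \<bar>a j\<bar>) powr (1 / real k)"

lemma max_quadform_scale_nonneg: "0 \<le> max_quadform_scale k a N"
  by (simp add: max_quadform_scale_def gamma_k_def)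

lemma max_quadform_scale_pos:
  assumes "0 < k" "\<And>j. j < k \<Longrightarrow> a j \<noteq> 0" "0 < N"
  shows "0 < max_quadform_scale k a N"
  using assms gamma_k_pos[OF assms(1)] by (simp add: max_quadform_scale_def prod_pos)

lemma max_quadform_threshold_radius:
  assumes k: "0 < k" and a: "\<And>j. j < k \<Longrightarrow> a j \<noteq> 0" and y: "y > 0"
  defines "T \<equiv> y * (\<Prod>j<k. \<bar>a j\<bar>) powr (1 / real k) / gamma_k k"
  shows "(\<lambda>N. sqrt (y / max_quadform_scale k a N)) \<longlonglongrightarrow> 0"
    and "0 < N \<Longrightarrow> real N * sqrt (y / max_quadform_scale k a N) ^ k = T powr (real k / 2)"
proof -
  have T: "T > 0"
    unfolding T_def using y a gamma_k_pos[OF k] by (simp add: prod_pos)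
  have threshold: "y / max_quadform_scale k a N = T * real N powr (- 2 / real k)" for N
    unfolding max_quadform_scale_def T_def by (simp add: powr_minus_divide field_simps)
  have "(\<lambda>N. real N powr (- 2 / real k)) \<longlonglongrightarrow> 0"
    using k by (intro tendsto_neg_powr filterlim_real_sequentially) simp
  from tendsto_real_sqrt[OF tendsto_mult[OF tendsto_const[of T] this]]
  show "(\<lambda>N. sqrt (y / max_quadform_scale k a N)) \<longlonglongrightarrow> 0"
    by (simp add: threshold)
  assume "0 < N"
  have "sqrt (y / max_quadform_scale k a N) ^ k
      = T powr (real k / 2) * (real N powr (- 2 / real k)) powr (real k / 2)"
    unfolding threshold using T \<open>0 < N\<close> by (subst sqrt_power_eq_powr) (auto simp: powr_mult)
  also have "(real N powr (- 2 / real k)) powr (real k / 2) = real N powr (- 1)"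
    using k by (simp add: powr_powr)
  also have "\<dots> = 1 / real N"
    using \<open>0 < N\<close> by (simp add: powr_minus_divide)
  finally show "real N * sqrt (y / max_quadform_scale k a N) ^ k = T powr (real k / 2)"
    using \<open>0 < N\<close> by simp
qed

lemma quadform_diagA:
  assumes "k \<le> N"
  shows "quadform N (diagA k a) y = (\<Sum>j<k. a j * (y j)\<^sup>2)"
proof -
  have row: "(\<Sum>j<N. diagA k a i j * y j) = (if i < k then a i * y i else 0)" if "i < N" for i
  proof -
    have "(\<Sum>j<N. diagA k a i j * y j) = (\<Sum>j<N. if j = i then (if i < k then a i * y i else 0) else 0)"
      unfolding diagA_def by (intro sum.cong) auto
    then show ?thesis
      using that by simp
  qed
  have "quadform N (diagA k a) y = (\<Sum>i<N. if i < k then a i * (y i)\<^sup>2 else 0)"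
    unfolding quadform_def by (intro sum.cong) (auto simp: row power2_eq_square)
  also have "\<dots> = (\<Sum>i\<in>{..<N} \<inter> {i. i < k}. a i * (y i)\<^sup>2)"
    by (simp add: sum.inter_restrict)
  also have "{..<N} \<inter> {i. i < k} = {..<k}"
    using assms by auto
  finally show ?thesis .
qed

locale gaussian_matrix = prob_space M for M :: "'w measure" +
  fixes N :: nat and Y :: "nat \<Rightarrow> 'w \<Rightarrow> nat \<Rightarrow> real"
  assumes indep_entries: "indep_vars (\<lambda>_. borel) (\<lambda>(i, j) \<omega>. Y i \<omega> j) ({..<N} \<times> {..<N})"
    and std_normal_entries:
      "\<And>i j. i < N \<Longrightarrow> j < N \<Longrightarrow> distributed M lborel (\<lambda>\<omega>. Y i \<omega> j) std_normal_density"
begin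

lemma entry_measurable [measurable]:
  "i < N \<Longrightarrow> j < N \<Longrightarrow> (\<lambda>\<omega>. Y i \<omega> j) \<in> borel_measurable M"
  using distributed_measurable[OF std_normal_entries] by simp

lemma row_sum_sq_measurable:
  assumes "k \<le> N" "i < N"
  shows "(\<lambda>\<omega>. \<Sum>j<k. (b j * Y i \<omega> j)\<^sup>2) \<in> borel_measurable M"
  using assms by (intro borel_measurable_sum borel_measurable_power borel_measurable_times
      borel_measurable_const entry_measurable) auto

lemma indep_row_sum_sq:
  assumes "k \<le> N"
  shows "indep_vars (\<lambda>_. borel) (\<lambda>i \<omega>. \<Sum>j<k. (b j * Y i \<omega> j)\<^sup>2) {..<N}"
proof -
  have "indep_vars (\<lambda>_. borel)
      (\<lambda>i \<omega>. (\<lambda>v. \<Sum>j<k. (b j * v (i, j))\<^sup>2)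
                (restrict (\<lambda>p. (case p of (i, j) \<Rightarrow> \<lambda>\<omega>. Y i \<omega> j) \<omega>) ({i} \<times> {..<k}))) {..<N}"
    using assms by (intro indep_vars_block_functions[OF indep_entries])
      (auto simp: disjoint_family_on_def)
  then show ?thesis
    by simp
qed

lemma prob_row_sum_sq_less_bounds:
  assumes k: "0 < k" "k \<le> N" and i: "i < N" and b: "\<And>j. j < k \<Longrightarrow> b j > 0" and r: "r > 0"
  shows "(\<Prod>j<k. normal_density 0 (b j) r) * (unit_ball_vol k * r ^ k)
           \<le> prob {\<omega>\<in>space M. (\<Sum>j<k. (b j * Y i \<omega> j)\<^sup>2) < r\<^sup>2}"
    and "prob {\<omega>\<in>space M. (\<Sum>j<k. (b j * Y i \<omega> j)\<^sup>2) < r\<^sup>2}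
           \<le> (\<Prod>j<k. normal_density 0 (b j) 0) * (unit_ball_vol k * r ^ k)"
proof -
  \<comment> \<open>The singleton blocks \<open>{(i, j)}\<close> reindex row \<open>i\<close> by the column \<open>j\<close>.\<close>
  have "indep_vars (\<lambda>_. borel)
      (\<lambda>j \<omega>. b j * restrict (\<lambda>p. (case p of (i, j) \<Rightarrow> \<lambda>\<omega>. Y i \<omega> j) \<omega>) {(i, j)} (i, j)) {..<k}"
    using k i by (intro indep_vars_block_functions[OF indep_entries]) (auto simp: disjoint_family_on_def)
  then have indep: "indep_vars (\<lambda>_. borel) (\<lambda>j \<omega>. b j * Y i \<omega> j) {..<k}"
    by simp
  have normal: "distributed M lborel (\<lambda>\<omega>. b j * Y i \<omega> j) (normal_density 0 (b j))" if "j \<in> {..<k}" for j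
  proof -
    have "b j > 0"
      using b that by simp
    then show ?thesis
      using normal_density_affine[OF std_normal_entries, of i j "b j" 0] that k i by simp
  qed
  show "(\<Prod>j<k. normal_density 0 (b j) r) * (unit_ball_vol k * r ^ k)
           \<le> prob {\<omega>\<in>space M. (\<Sum>j<k. (b j * Y i \<omega> j)\<^sup>2) < r\<^sup>2}"
    using indep_normal_prob_sum_sq_less_bounds(1)[OF _ _ indep normal b r] k by (simp add: lessThan_empty_iff)
  show "prob {\<omega>\<in>space M. (\<Sum>j<k. (b j * Y i \<omega> j)\<^sup>2) < r\<^sup>2}
           \<le> (\<Prod>j<k. normal_density 0 (b j) 0) * (unit_ball_vol k * r ^ k)"
    using indep_normal_prob_sum_sq_less_bounds(2)[OF _ _ indep normal b r] k by (simp add: lessThan_empty_iff)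
qed

lemma cdf_scaled_max_quadform:
  assumes N: "k \<le> N" "0 < N" and a: "\<And>j. j < k \<Longrightarrow> a j < 0" and c: "c > 0"
  shows "cdf (distr M borel (\<lambda>\<omega>. c * Max ((\<lambda>i. quadform N (diagA k a) (Y i \<omega>)) ` {..<N}))) x
       = (\<Prod>i<N. 1 - prob {\<omega>\<in>space M. (\<Sum>j<k. (sqrt \<bar>a j\<bar> * Y i \<omega> j)\<^sup>2) < - x / c})"
proof -
  define S where "S = (\<lambda>i \<omega>. \<Sum>j<k. (sqrt \<bar>a j\<bar> * Y i \<omega> j)\<^sup>2)"
  have "a j * (Y i \<omega> j)\<^sup>2 = - (sqrt \<bar>a j\<bar> * Y i \<omega> j)\<^sup>2" if "j < k" for i \<omega> j
    using a[OF that] by (simp add: power_mult_distrib)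
  then have quadform: "quadform N (diagA k a) (Y i \<omega>) = - S i \<omega>" for i \<omega>
    unfolding quadform_diagA[OF N(1)] S_def sum_negf[symmetric] by (intro sum.cong) auto
  have S_measurable [measurable]: "S i \<in> borel_measurable M" if "i < N" for i
    unfolding S_def using N(1) that by (rule row_sum_sq_measurable)
  have "c * Max ((\<lambda>i. - S i \<omega>) ` {..<N}) \<le> x \<longleftrightarrow> Max ((\<lambda>i. - S i \<omega>) ` {..<N}) \<le> x / c"
    for \<omega>
    using c by (simp add: pos_le_divide_eq mult.commute)
  also have "\<dots> \<omega> \<longleftrightarrow> (\<forall>i<N. - x / c \<le> S i \<omega>)" for \<omega>
    using N by (subst Max_le_iff) force+
  finally have "{\<omega>\<in>space M. c * Max ((\<lambda>i. quadform N (diagA k a) (Y i \<omega>)) ` {..<N}) \<le> x}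
      = (\<Inter>i\<in>{..<N}. S i -` {- x / c..} \<inter> space M)"
    using N unfolding quadform by auto
  then have "cdf (distr M borel (\<lambda>\<omega>. c * Max ((\<lambda>i. quadform N (diagA k a) (Y i \<omega>)) ` {..<N}))) x
      = prob (\<Inter>i\<in>{..<N}. S i -` {- x / c..} \<inter> space M)"
    unfolding cdf_def quadform by (subst measure_distr) (auto simp: vimage_def Int_def conj_commute)
  also have "\<dots> = (\<Prod>i<N. prob (S i -` {- x / c..} \<inter> space M))"
    unfolding S_def using N
    by (intro indep_varsD_finite[where A="\<lambda>_. {- x / c..}", OF indep_row_sum_sq]) auto
  also have "\<dots> = (\<Prod>i<N. 1 - prob {\<omega>\<in>space M. S i \<omega> < - x / c})"
  proof (intro prod.cong refl)
    fix i assume "i \<in> {..<N}"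
    then have "prob (space M - {\<omega>\<in>space M. S i \<omega> < - x / c}) = 1 - prob {\<omega>\<in>space M. S i \<omega> < - x / c}"
      by (intro prob_compl) measurable
    moreover have "space M - {\<omega>\<in>space M. S i \<omega> < - x / c} = S i -` {- x / c..} \<inter> space M"
      by auto
    ultimately show "prob (S i -` {- x / c..} \<inter> space M) = 1 - prob {\<omega>\<in>space M. S i \<omega> < - x / c}"
      by simp
  qed
  finally show ?thesis
    unfolding S_def .
qed

end

lemma prod_row_probs_tendsto_exp:
  fixes M :: "nat \<Rightarrow> 'w measure" and Y :: "nat \<Rightarrow> nat \<Rightarrow> 'w \<Rightarrow> nat \<Rightarrow> real"
  assumes gaussian: "\<And>N. gaussian_matrix (M N) N (Y N)"
    and k: "0 < k" and b: "\<And>j. j < k \<Longrightarrow> b j > 0"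
    and r_pos: "eventually (\<lambda>N. r N > 0) sequentially" and r: "r \<longlonglongrightarrow> 0"
    and R: "(\<lambda>N. real N * r N ^ k) \<longlonglongrightarrow> R"
  shows "(\<lambda>N. \<Prod>i<N. 1 - measure (M N)
            {\<omega>\<in>space (M N). (\<Sum>j<k. (b j * Y N i \<omega> j)\<^sup>2) < (r N)\<^sup>2})
           \<longlonglongrightarrow> exp (- ((\<Prod>j<k. normal_density 0 (b j) 0) * unit_ball_vol k * R))"
proof (rule tendsto_prod_one_minus_exp)
  define lo where "lo N = (\<Prod>j<k. normal_density 0 (b j) (r N)) * (unit_ball_vol k * r N ^ k)" for N
  define hi where "hi N = (\<Prod>j<k. normal_density 0 (b j) 0) * (unit_ball_vol k * r N ^ k)" for N
  show "eventually (\<lambda>N. 0 \<le> lo N \<and> (\<forall>i<N.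
      lo N \<le> measure (M N) {\<omega>\<in>space (M N). (\<Sum>j<k. (b j * Y N i \<omega> j)\<^sup>2) < (r N)\<^sup>2} \<and>
      measure (M N) {\<omega>\<in>space (M N). (\<Sum>j<k. (b j * Y N i \<omega> j)\<^sup>2) < (r N)\<^sup>2} \<le> hi N)) sequentially"
    using r_pos eventually_ge_at_top[of k]
  proof eventually_elim
    case (elim N)
    then show ?case
      using gaussian_matrix.prob_row_sum_sq_less_bounds[OF gaussian k _ _ b]
      unfolding lo_def hi_def by (auto intro!: mult_nonneg_nonneg prod_nonneg)
  qed
  have "(\<lambda>N. \<Prod>j<k. normal_density 0 (b j) (r N)) \<longlonglongrightarrow> (\<Prod>j<k. normal_density 0 (b j) 0)"
    unfolding normal_density_def by (intro tendsto_intros r) (use b in force)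
  from tendsto_mult[OF tendsto_mult[OF this tendsto_const[of "unit_ball_vol k"]] R]
  show "(\<lambda>N. real N * lo N) \<longlonglongrightarrow> (\<Prod>j<k. normal_density 0 (b j) 0) * unit_ball_vol k * R"
    by (simp add: lo_def ac_simps)
  from tendsto_mult[OF tendsto_const[of "(\<Prod>j<k. normal_density 0 (b j) 0) * unit_ball_vol k"] R]
  show "(\<lambda>N. real N * hi N) \<longlonglongrightarrow> (\<Prod>j<k. normal_density 0 (b j) 0) * unit_ball_vol k * R"
    by (simp add: hi_def ac_simps)
qed

lemma prod_row_probs_scaled_tendsto_neg:
  fixes M :: "nat \<Rightarrow> 'w measure" and Y :: "nat \<Rightarrow> nat \<Rightarrow> 'w \<Rightarrow> nat \<Rightarrow> real"
  assumes gaussian: "\<And>N. gaussian_matrix (M N) N (Y N)" and k: "0 < k"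
    and a: "\<And>j. j < k \<Longrightarrow> a j < 0" and x: "x < 0"
  shows "(\<lambda>N. \<Prod>i<N. 1 - measure (M N) {\<omega>\<in>space (M N).
            (\<Sum>j<k. (sqrt \<bar>a j\<bar> * Y N i \<omega> j)\<^sup>2) < - x / max_quadform_scale k a N})
           \<longlonglongrightarrow> exp (- ((- x) powr (real k / 2)))"
proof -
  define P where "P = (\<Prod>j<k. \<bar>a j\<bar>)"
  define r where "r N = sqrt (- x / max_quadform_scale k a N)" for N
  define R where "R = (- x * P powr (1 / real k) / gamma_k k) powr (real k / 2)"
  have a_nonzero: "\<And>j. j < k \<Longrightarrow> a j \<noteq> 0"
    using a by force
  have P: "P > 0"
    unfolding P_def using a_nonzero by (intro prod_pos) force
  from x have "0 < - x"
    by simp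
  note radius = max_quadform_threshold_radius[OF k a_nonzero this]
  have r_lim: "r \<longlonglongrightarrow> 0"
    unfolding r_def[abs_def] by (rule radius(1))
  have "eventually (\<lambda>N. real N * r N ^ k = R) sequentially"
    using eventually_gt_at_top[of 0] by eventually_elim (simp only: r_def R_def P_def radius(2))
  then have R_lim: "(\<lambda>N. real N * r N ^ k) \<longlonglongrightarrow> R"
    by (rule tendsto_eventually)
  have r_pos: "eventually (\<lambda>N. r N > 0) sequentially"
    using eventually_gt_at_top[of 0] 
    by eventually_elim (use x max_quadform_scale_pos[OF k a_nonzero] in \<open>simp add: r_def divide_neg_pos\<close>)
  have r_sq: "(r N)\<^sup>2 = - x / max_quadform_scale k a N" for N
    unfolding r_def using x max_quadform_scale_nonneg[of k a N]
    by (intro real_sqrt_pow2 divide_nonneg_nonneg) auto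
  have "(\<Prod>j<k. normal_density 0 (sqrt \<bar>a j\<bar>) 0) = 1 / (sqrt (2 * pi) ^ k * sqrt P)"
    unfolding prod_normal_density_zero P_def
    by (simp add: powr_half_sqrt[symmetric] prod_powr_distrib prod_nonneg)
  then have const: "(\<Prod>j<k. normal_density 0 (sqrt \<bar>a j\<bar>) 0) * unit_ball_vol k * R = (- x) powr (real k / 2)"
    unfolding R_def using scaled_threshold_constant[OF k \<open>0 < - x\<close> P] by simp
  have "(\<lambda>N. \<Prod>i<N. 1 - measure (M N)
      {\<omega>\<in>space (M N). (\<Sum>j<k. (sqrt \<bar>a j\<bar> * Y N i \<omega> j)\<^sup>2) < (r N)\<^sup>2})
      \<longlonglongrightarrow> exp (- ((\<Prod>j<k. normal_density 0 (sqrt \<bar>a j\<bar>) 0) * unit_ball_vol k * R))"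
    using a_nonzero by (intro prod_row_probs_tendsto_exp[OF gaussian k _ r_pos r_lim R_lim]) simp
  then show ?thesis
    unfolding r_sq const .
qed

lemma prod_row_probs_scaled_tendsto:
  fixes M :: "nat \<Rightarrow> 'w measure" and Y :: "nat \<Rightarrow> nat \<Rightarrow> 'w \<Rightarrow> nat \<Rightarrow> real"
  assumes gaussian: "\<And>N. gaussian_matrix (M N) N (Y N)" and k: "0 < k"
    and a: "\<And>j. j < k \<Longrightarrow> a j < 0"
  shows "(\<lambda>N. \<Prod>i<N. 1 - measure (M N) {\<omega>\<in>space (M N).
            (\<Sum>j<k. (sqrt \<bar>a j\<bar> * Y N i \<omega> j)\<^sup>2) < - x / max_quadform_scale k a N})
           \<longlonglongrightarrow> Psi_cdf (real k / 2) x"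
proof (cases "x < 0")
  case True
  with prod_row_probs_scaled_tendsto_neg[OF gaussian k a True] show ?thesis
    by (simp add: Psi_cdf_def)
next
  case False
  have "- x / max_quadform_scale k a N \<le> 0" for N
    using False by (simp add: divide_nonpos_nonneg max_quadform_scale_nonneg)
  moreover have "0 \<le> (\<Sum>j<k. (sqrt \<bar>a j\<bar> * Y N i \<omega> j)\<^sup>2)" for N i \<omega>
    by (intro sum_nonneg) simp
  ultimately have "\<not> (\<Sum>j<k. (sqrt \<bar>a j\<bar> * Y N i \<omega> j)\<^sup>2) < - x / max_quadform_scale k a N" for N i \<omega>
    by (meson leD order_trans)
  with False show ?thesis
    by (simp add: Psi_cdf_def)
qed

theorem lemma4p3:
  fixes k :: nat and a :: "nat \<Rightarrow> real"
    and M :: "nat \<Rightarrow> 'w measure"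
    and Y :: "nat \<Rightarrow> nat \<Rightarrow> 'w \<Rightarrow> nat \<Rightarrow> real"
    and Psi :: "real measure"
  assumes k_pos: "k \<ge> 1"
    and a_neg: "\<And>j. j < k \<Longrightarrow> a j < 0"
    and prob: "\<And>N. prob_space (M N)"
    and indep: "\<And>N. prob_space.indep_vars (M N) (\<lambda>_. borel)
                   (\<lambda>(i, j) \<omega>. Y N i \<omega> j) ({..<N} \<times> {..<N})"
    and gauss: "\<And>N i j. i < N \<Longrightarrow> j < N \<Longrightarrow>
                   distributed (M N) lborel (\<lambda>\<omega>. Y N i \<omega> j) std_normal_density"
    and Psi_distr: "real_distribution Psi"
    and Psi_cdf: "\<And>x. cdf Psi x = Psi_cdf (real k / 2) x"
  shows "weak_conv_m
           (\<lambda>N. distr (M N) borel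
              (\<lambda>\<omega>. gamma_k k * real N powr (2 / real k)
                     / (\<Prod>j<k. \<bar>a j\<bar>) powr (1 / real k)
                     * Max ((\<lambda>i. quadform N (diagA k a) (Y N i \<omega>)) ` {..<N})))
           Psi"
proof -
  have k: "0 < k"
    using k_pos by simp
  have gaussian: "gaussian_matrix (M N) N (Y N)" for N
    using prob indep gauss by (simp add: gaussian_matrix_def gaussian_matrix_axioms_def)
  have scale_pos: "max_quadform_scale k a N > 0" if "0 < N" for N
    using a_neg that by (intro max_quadform_scale_pos k) force+
  have "eventually (\<lambda>N. (\<Prod>i<N. 1 - measure (M N) {\<omega>\<in>space (M N).
        (\<Sum>j<k. (sqrt \<bar>a j\<bar> * Y N i \<omega> j)\<^sup>2) < - x / max_quadform_scale k a N})
      = cdf (distr (M N) borel (\<lambda>\<omega>. max_quadform_scale k a N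
          * Max ((\<lambda>i. quadform N (diagA k a) (Y N i \<omega>)) ` {..<N}))) x) sequentially" for x
    using eventually_gt_at_top[of k]
    by eventually_elim (simp add: gaussian_matrix.cdf_scaled_max_quadform[OF gaussian] a_neg scale_pos)
  from Lim_transform_eventually[OF prod_row_probs_scaled_tendsto[OF gaussian k a_neg] this]
  show ?thesis
    unfolding weak_conv_m_def weak_conv_def Psi_cdf max_quadform_scale_def by blast
qed

end
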